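(* Let $k \geq 1$ and let $\{b_j, b_j^\perp\}$, $j = 0,1,\ldots,2k+1$, be orthonormal bases of $\mathbb{C}^2$ (so $\langle b_j, b_j^\perp\rangle = 0$) such that for all $i \neq j$ the quantities $|\langle b_i,b_j\rangle|$, $|\langle b_i,b_j^\perp\rangle|$, $|\langle b_i^\perp,b_j\rangle|$, $|\langle b_i^\perp,b_j^\perp\rangle|$ all lie outside $\{0,1\}$. For $0 \leq j \leq k$ define vectors in $\mathbb{C}^2\otimes\mathbb{C}^2$: $$v_{2j} := b_j \otimes b_{2j}^\perp,\quad v_{2j+1} := b_j^\perp \otimes b_{(2j+2) \bmod (2k+2)},\quad w_{2j} := b_j^\perp \otimes b_{2j+1}^\perp,\quad w_{2j+1} := b_j \otimes b_{(2j+3) \bmod (2k+2)}.$$ Then: (a) the orthogonality graph of $\{v_0,\ldots,v_{2k+1},w_0,\ldots,w_{2k+1}\}$ is the prism graph $Y_{4k+4}$, i.e. $v_i$ and $v_j$ (respectively $w_i$ and $w_j$) are orthogonal iff $j - i \equiv \pm 1 \pmod{2k+2}$, and $v_i$ and $w_j$ are orthogonal iff $i = j$; (b) every nonzero product vector $x \otimes y \in \mathbb{C}^2\otimes\mathbb{C}^2$ is orthogonal to at most $3$ of the $4k+4$ vectors $v_0,\ldots,v_{2k+1},w_0,\ldots,w_{2k+1}$.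
   Context: The orthogonality graph of a finite list of vectors is the simple graph whose vertices are the vectors and in which two distinct vertices are adjacent iff the corresponding vectors are orthogonal. For product vectors, $x_1\otimes x_2$ and $y_1\otimes y_2$ are orthogonal iff $\langle x_1,y_1\rangle = 0$ or $\langle x_2,y_2\rangle = 0$. *)

theory Defs
  imports "HOL-Analysis.Analysis"
begin

text \<open>Vectors of C^2 are modelled as complex^2; vectors of C^2 (x) C^2 as complex^2^2
  (coefficient array with respect to the standard product basis).\<close>

definition cinner2 :: "complex^2 \<Rightarrow> complex^2 \<Rightarrow> complex" where
  "cinner2 x y = (\<Sum>i\<in>UNIV. cnj (x $ i) * y $ i)"

definition tensor :: "complex^2 \<Rightarrow> complex^2 \<Rightarrow> complex^2^2" where
  "tensor x y = (\<chi> i j. x $ i * y $ j)"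

definition cinner4 :: "complex^2^2 \<Rightarrow> complex^2^2 \<Rightarrow> complex" where
  "cinner4 a c = (\<Sum>i\<in>UNIV. \<Sum>j\<in>UNIV. cnj (a $ i $ j) * c $ i $ j)"

definition orth4 :: "complex^2^2 \<Rightarrow> complex^2^2 \<Rightarrow> bool" where
  "orth4 a c \<longleftrightarrow> cinner4 a c = 0"

definition vvec :: "nat \<Rightarrow> (nat \<Rightarrow> complex^2) \<Rightarrow> (nat \<Rightarrow> complex^2) \<Rightarrow> nat \<Rightarrow> complex^2^2" where
  "vvec k b bp i = (if even i then tensor (b (i div 2)) (bp i)
                    else tensor (bp (i div 2)) (b ((i + 1) mod (2*k+2))))"

definition wvec :: "nat \<Rightarrow> (nat \<Rightarrow> complex^2) \<Rightarrow> (nat \<Rightarrow> complex^2) \<Rightarrow> nat \<Rightarrow> complex^2^2" where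
  "wvec k b bp i = (if even i then tensor (bp (i div 2)) (bp (i + 1))
                    else tensor (b (i div 2)) (b ((i + 2) mod (2*k+2))))"

end

theory Submission imports Defs begin

text \<open>Writing each vector as \<open>v\<^sub>i = f\<^sub>i \<otimes> s\<^sub>i\<close> with \<open>f\<^sub>i, s\<^sub>i\<close> among the basis vectors \<open>b\<^sub>m, b\<^sub>m\<^sup>\<perp>\<close>,
  two product vectors are orthogonal iff their first or their second factors are. Under the
  genericity hypothesis two basis vectors are orthogonal only if they are \<open>b\<^sub>m\<close> and \<open>b\<^sub>m\<^sup>\<perp>\<close>, which
  turns (a) into index arithmetic. For (b), a nonzero vector of \<open>\<complex>\<^sup>2\<close> is orthogonal to at most one
  of the basis vectors, since two unit vectors orthogonal to it are parallel. Hence \<open>x\<close> kills at most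
  one first factor among the \<open>v\<^sub>i\<close> and one among the \<open>w\<^sub>i\<close>, while \<open>y\<close> kills at most one second
  factor overall, because the second factors of the \<open>v\<^sub>i\<close> carry even and those of the \<open>w\<^sub>i\<close> odd
  indices.\<close>

lemma cinner2_expand: "cinner2 x y = cnj (x$1) * y$1 + cnj (x$2) * y$2"
  unfolding cinner2_def sum_2 by simp

lemma cinner2_commute: "cinner2 y x = cnj (cinner2 x y)"
  unfolding cinner2_expand by simp

lemma cinner4_tensor: "cinner4 (tensor a c) (tensor a' c') = cinner2 a a' * cinner2 c c'"
  unfolding cinner4_def tensor_def cinner2_expand sum_2 by (simp add: algebra_simps)

lemma orth4_tensor_iff:
  "orth4 (tensor a c) (tensor a' c') \<longleftrightarrow> cinner2 a a' = 0 \<or> cinner2 c c' = 0"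
  unfolding orth4_def cinner4_tensor by simp

lemma tensor_nonzero_imp: "tensor x y \<noteq> 0 \<Longrightarrow> x \<noteq> 0 \<and> y \<noteq> 0"
  unfolding tensor_def by (auto simp: vec_eq_iff)

lemma cinner2_lagrange_identity:
  "cinner2 u w * cnj (cinner2 u w) + (u$1 * w$2 - u$2 * w$1) * cnj (u$1 * w$2 - u$2 * w$1)
   = cinner2 u u * cinner2 w w"
  unfolding cinner2_expand by (simp add: algebra_simps)

lemma det2_eq_0_if_common_orth:
  assumes "x \<noteq> 0" "cinner2 x u = 0" "cinner2 x w = 0"
  shows "u$1 * w$2 - u$2 * w$1 = 0"
proof -
  have "cnj (x$1) * (u$1 * w$2 - u$2 * w$1) = 0" "cnj (x$2) * (u$1 * w$2 - u$2 * w$1) = 0"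
    using assms(2,3) unfolding cinner2_expand by algebra+
  moreover have "x$1 \<noteq> 0 \<or> x$2 \<noteq> 0"
    using assms(1) by (auto simp: vec_eq_iff forall_2)
  ultimately show ?thesis by auto
qed

lemma norm_cinner2_eq_1_if_common_orth:
  assumes "x \<noteq> 0" "cinner2 x u = 0" "cinner2 x w = 0" "cinner2 u u = 1" "cinner2 w w = 1"
  shows "norm (cinner2 u w) = 1"
proof -
  have "cinner2 u w * cnj (cinner2 u w) = 1"
    using cinner2_lagrange_identity[of u w] det2_eq_0_if_common_orth[OF assms(1-3)] assms(4,5)
    by simp
  then have "(norm (cinner2 u w))\<^sup>2 = 1"
    by (metis complex_norm_square of_real_eq_1_iff)
  then show ?thesis
    using norm_ge_zero[of "cinner2 u w"] by (auto simp: power2_eq_1_iff)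
qed

definition cyclic_adj :: "nat \<Rightarrow> nat \<Rightarrow> nat \<Rightarrow> bool" where
  "cyclic_adj n i j \<longleftrightarrow> j = i + 1 \<or> i = j + 1 \<or> (i = 0 \<and> j = n - 1) \<or> (j = 0 \<and> i = n - 1)"

lemma int_diff_mod_in_pm1_iff_cyclic_adj:
  assumes "i < n" "j < n"
  shows "(int j - int i) mod int n \<in> {1, int n - 1} \<longleftrightarrow> cyclic_adj n i j"
proof (cases "i \<le> j")
  case True
  then have "(int j - int i) mod int n = int j - int i"
    using assms by (intro mod_pos_pos_trivial) auto
  then show ?thesis using assms True unfolding cyclic_adj_def by auto
next
  case False
  have "(int j - int i) mod int n = (int j - int i + int n) mod int n"
    by simp
  also have "\<dots> = int j - int i + int n"
    using assms False by (intro mod_pos_pos_trivial) auto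
  finally show ?thesis using assms False unfolding cyclic_adj_def by auto
qed

lemma nat_parity_cases:
  obtains a where "(i::nat) = 2*a" | a where "i = 2*a + 1"
  by (metis evenE oddE)

locale generic_bases =
  fixes k :: nat and b bp :: "nat \<Rightarrow> complex^2"
  assumes k: "k \<ge> 1"
    and onb: "\<And>j. j \<le> 2*k+1 \<Longrightarrow>
                cinner2 (b j) (b j) = 1 \<and> cinner2 (bp j) (bp j) = 1 \<and> cinner2 (b j) (bp j) = 0"
    and gen: "\<And>i j. i \<le> 2*k+1 \<Longrightarrow> j \<le> 2*k+1 \<Longrightarrow> i \<noteq> j \<Longrightarrow>
                norm (cinner2 (b i) (b j)) \<notin> {0, 1} \<and> norm (cinner2 (b i) (bp j)) \<notin> {0, 1} \<and>
                norm (cinner2 (bp i) (b j)) \<notin> {0, 1} \<and> norm (cinner2 (bp i) (bp j)) \<notin> {0, 1}"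
begin

definition bvec :: "bool \<Rightarrow> nat \<Rightarrow> complex^2" where
  "bvec s m = (if s then b m else bp m)"

lemma cinner2_bvec_self: "m \<le> 2*k+1 \<Longrightarrow> cinner2 (bvec s m) (bvec s m) = 1"
  using onb by (simp add: bvec_def)

lemma cinner2_bvec_eq_0_iff:
  assumes "m \<le> 2*k+1" "n \<le> 2*k+1"
  shows "cinner2 (bvec s m) (bvec t n) = 0 \<longleftrightarrow> s \<noteq> t \<and> m = n"
proof (cases "m = n")
  case True
  then show ?thesis
    using onb[OF assms(2)] cinner2_commute[of "b n" "bp n"] by (auto simp: bvec_def)
next
  case False
  then show ?thesis
    using gen[OF assms False] by (cases s; cases t) (auto simp: bvec_def)
qed

lemma common_orth_bvec_unique:
  assumes "x \<noteq> 0" "m \<le> 2*k+1" "n \<le> 2*k+1"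
    and "cinner2 x (bvec s m) = 0" "cinner2 x (bvec t n) = 0"
  shows "s = t \<and> m = n"
proof -
  have norm1: "norm (cinner2 (bvec s m) (bvec t n)) = 1"
    using norm_cinner2_eq_1_if_common_orth assms cinner2_bvec_self by blast
  show ?thesis
  proof (cases "m = n")
    case True
    then show ?thesis using norm1 cinner2_bvec_eq_0_iff[OF assms(2,3), of s t] by auto
  next
    case False
    then show ?thesis using norm1 gen[OF assms(2,3) False] by (cases s; cases t) (auto simp: bvec_def)
  qed
qed

definition v_snd :: "nat \<Rightarrow> nat" where
  "v_snd i = (if even i then i else if i = 2*k+1 then 0 else i + 1)"

definition w_snd :: "nat \<Rightarrow> nat" where
  "w_snd i = (if even i then i + 1 else if i = 2*k+1 then 1 else i + 2)"

lemma vvec_eq: "i \<le> 2*k+1 \<Longrightarrow> vvec k b bp i = tensor (bvec (even i) (i div 2)) (bvec (odd i) (v_snd i))"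
  by (auto simp: vvec_def bvec_def v_snd_def)

lemma wvec_eq:
  assumes "i \<le> 2*k+1"
  shows "wvec k b bp i = tensor (bvec (odd i) (i div 2)) (bvec (odd i) (w_snd i))"
proof -
  have "(i + 2) mod (2*k+2) = (if i = 2*k+1 then 1 else i + 2)" if "odd i" "i \<le> 2*k+1"
  proof (cases "i = 2*k+1")
    case True
    then have "i + 2 = 1 + (2*k+2)" by simp
    then show ?thesis using True by (simp only: mod_add_self2) simp
  next
    case False
    with that have "i + 2 < 2*k+2" by presburger
    then show ?thesis using False by simp
  qed
  with assms show ?thesis by (auto simp: wvec_def bvec_def w_snd_def)
qed

lemma v_snd_le: "i \<le> 2*k+1 \<Longrightarrow> v_snd i \<le> 2*k+1"
  by (simp add: v_snd_def)

lemma w_snd_le: "i \<le> 2*k+1 \<Longrightarrow> w_snd i \<le> 2*k+1"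
  by (cases i rule: nat_parity_cases) (auto simp: w_snd_def)

lemma even_v_snd: "even (v_snd i)"
  by (simp add: v_snd_def)

lemma odd_w_snd: "odd (w_snd i)"
  by (simp add: w_snd_def)

lemma v_adjacency:
  assumes "i \<le> 2*k+1" "j \<le> 2*k+1"
  shows "(even i \<noteq> even j \<and> i div 2 = j div 2) \<or> (odd i \<noteq> odd j \<and> v_snd i = v_snd j)
    \<longleftrightarrow> cyclic_adj (2*k+2) i j"
  using assms k
  by (cases i rule: nat_parity_cases; cases j rule: nat_parity_cases;
      auto simp: v_snd_def cyclic_adj_def; presburger)

lemma w_adjacency:
  assumes "i \<le> 2*k+1" "j \<le> 2*k+1"
  shows "(odd i \<noteq> odd j \<and> i div 2 = j div 2) \<or> (odd i \<noteq> odd j \<and> w_snd i = w_snd j)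
    \<longleftrightarrow> cyclic_adj (2*k+2) i j"
  using assms k
  by (cases i rule: nat_parity_cases; cases j rule: nat_parity_cases;
      auto simp: w_snd_def cyclic_adj_def; presburger)

lemma vw_adjacency:
  "(even i \<noteq> odd j \<and> i div 2 = j div 2) \<or> (odd i \<noteq> odd j \<and> v_snd i = w_snd j) \<longleftrightarrow> i = j"
proof -
  have "v_snd i \<noteq> w_snd j" using even_v_snd odd_w_snd by metis
  moreover have "(even i \<noteq> odd j \<and> i div 2 = j div 2) \<longleftrightarrow> i = j" by presburger
  ultimately show ?thesis by blast
qed

lemma cyclic_adj_iff_int_mod:
  assumes "i \<le> 2*k+1" "j \<le> 2*k+1"
  shows "cyclic_adj (2*k+2) i j \<longleftrightarrow> (int j - int i) mod (2*int k+2) \<in> {1, 2*int k+1}"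
  using int_diff_mod_in_pm1_iff_cyclic_adj[of i "2*k+2" j] assms by (simp add: add.commute)

lemma orth4_vvec_iff:
  assumes "i \<le> 2*k+1" "j \<le> 2*k+1"
  shows "orth4 (vvec k b bp i) (vvec k b bp j) \<longleftrightarrow>
           (int j - int i) mod (2*int k+2) \<in> {1, 2*int k+1}"
proof -
  have "i div 2 \<le> 2*k+1" "j div 2 \<le> 2*k+1" "v_snd i \<le> 2*k+1" "v_snd j \<le> 2*k+1"
    using assms v_snd_le by auto
  then have "orth4 (vvec k b bp i) (vvec k b bp j) \<longleftrightarrow>
      (even i \<noteq> even j \<and> i div 2 = j div 2) \<or> (odd i \<noteq> odd j \<and> v_snd i = v_snd j)"
    using assms by (simp add: vvec_eq orth4_tensor_iff cinner2_bvec_eq_0_iff)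
  also have "\<dots> \<longleftrightarrow> cyclic_adj (2*k+2) i j"
    by (rule v_adjacency[OF assms])
  finally show ?thesis
    using cyclic_adj_iff_int_mod[OF assms] by simp
qed

lemma orth4_wvec_iff:
  assumes "i \<le> 2*k+1" "j \<le> 2*k+1"
  shows "orth4 (wvec k b bp i) (wvec k b bp j) \<longleftrightarrow>
           (int j - int i) mod (2*int k+2) \<in> {1, 2*int k+1}"
proof -
  have "i div 2 \<le> 2*k+1" "j div 2 \<le> 2*k+1" "w_snd i \<le> 2*k+1" "w_snd j \<le> 2*k+1"
    using assms w_snd_le by auto
  then have "orth4 (wvec k b bp i) (wvec k b bp j) \<longleftrightarrow>
      (odd i \<noteq> odd j \<and> i div 2 = j div 2) \<or> (odd i \<noteq> odd j \<and> w_snd i = w_snd j)"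
    using assms by (simp add: wvec_eq orth4_tensor_iff cinner2_bvec_eq_0_iff)
  also have "\<dots> \<longleftrightarrow> cyclic_adj (2*k+2) i j"
    by (rule w_adjacency[OF assms])
  finally show ?thesis
    using cyclic_adj_iff_int_mod[OF assms] by simp
qed

lemma orth4_vvec_wvec_iff:
  assumes "i \<le> 2*k+1" "j \<le> 2*k+1"
  shows "orth4 (vvec k b bp i) (wvec k b bp j) \<longleftrightarrow> i = j"
proof -
  have "i div 2 \<le> 2*k+1" "j div 2 \<le> 2*k+1" "v_snd i \<le> 2*k+1" "w_snd j \<le> 2*k+1"
    using assms v_snd_le w_snd_le by auto
  then have "orth4 (vvec k b bp i) (wvec k b bp j) \<longleftrightarrow>
      (even i \<noteq> odd j \<and> i div 2 = j div 2) \<or> (odd i \<noteq> odd j \<and> v_snd i = w_snd j)"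
    using assms by (simp add: vvec_eq wvec_eq orth4_tensor_iff cinner2_bvec_eq_0_iff)
  then show ?thesis
    by (simp only: vw_adjacency)
qed

lemma inj_on_v_snd: "inj_on (\<lambda>i. (odd i, v_snd i)) {..2*k+1}"
  unfolding inj_on_def by (auto simp: v_snd_def split: if_splits; presburger)

lemma inj_on_w_snd: "inj_on (\<lambda>i. (odd i, w_snd i)) {..2*k+1}"
  unfolding inj_on_def by (auto simp: w_snd_def split: if_splits; presburger)

lemma card_orth_bvec_le_1:
  assumes "z \<noteq> 0" "inj_on (\<lambda>i. (p i, q i)) {..2*k+1}" "\<And>i. i \<le> 2*k+1 \<Longrightarrow> q i \<le> 2*k+1"
  shows "card {i. i \<le> 2*k+1 \<and> cinner2 z (bvec (p i) (q i)) = 0} \<le> 1"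
  (is "card ?S \<le> 1")
proof -
  have "i = j" if "i \<in> ?S" "j \<in> ?S" for i j
  proof -
    from that have "i \<le> 2*k+1" "j \<le> 2*k+1" "(p i, q i) = (p j, q j)"
      using common_orth_bvec_unique[OF assms(1) assms(3) assms(3)] by auto
    then show "i = j" using inj_onD[OF assms(2)] by auto
  qed
  moreover have "finite ?S" by auto
  ultimately show ?thesis using card_le_Suc0_iff_eq[of ?S] by auto
qed

lemma card_orth_product_le_3:
  assumes "tensor x y \<noteq> 0"
  shows "card {i. i \<le> 2*k+1 \<and> orth4 (tensor x y) (vvec k b bp i)}
       + card {i. i \<le> 2*k+1 \<and> orth4 (tensor x y) (wvec k b bp i)} \<le> 3"
proof -
  have x: "x \<noteq> 0" and y: "y \<noteq> 0" using tensor_nonzero_imp[OF assms] by auto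
  define xv where "xv = {i. i \<le> 2*k+1 \<and> cinner2 x (bvec (even i) (i div 2)) = 0}"
  define yv where "yv = {i. i \<le> 2*k+1 \<and> cinner2 y (bvec (odd i) (v_snd i)) = 0}"
  define xw where "xw = {i. i \<le> 2*k+1 \<and> cinner2 x (bvec (odd i) (i div 2)) = 0}"
  define yw where "yw = {i. i \<le> 2*k+1 \<and> cinner2 y (bvec (odd i) (w_snd i)) = 0}"
  have "{i. i \<le> 2*k+1 \<and> orth4 (tensor x y) (vvec k b bp i)} = xv \<union> yv"
    unfolding xv_def yv_def by (auto simp: vvec_eq orth4_tensor_iff)
  then have v_hits: "card {i. i \<le> 2*k+1 \<and> orth4 (tensor x y) (vvec k b bp i)} \<le> card xv + card yv"
    by (simp add: card_Un_le)
  have "{i. i \<le> 2*k+1 \<and> orth4 (tensor x y) (wvec k b bp i)} = xw \<union> yw"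
    unfolding xw_def yw_def by (auto simp: wvec_eq orth4_tensor_iff)
  then have w_hits: "card {i. i \<le> 2*k+1 \<and> orth4 (tensor x y) (wvec k b bp i)} \<le> card xw + card yw"
    by (simp add: card_Un_le)
  have "card xv \<le> 1" "card xw \<le> 1"
    unfolding xv_def xw_def
    by (intro card_orth_bvec_le_1[OF x] inj_onI; simp; presburger)+
  moreover have "card yv \<le> 1" "card yw \<le> 1"
    unfolding yv_def yw_def
    using card_orth_bvec_le_1[OF y inj_on_v_snd v_snd_le] card_orth_bvec_le_1[OF y inj_on_w_snd w_snd_le]
    by auto
  moreover have "yv = {} \<or> yw = {}"
  proof (rule ccontr)
    assume "\<not> (yv = {} \<or> yw = {})"
    then obtain i j where "i \<in> yv" "j \<in> yw" by auto
    then have "v_snd i = w_snd j"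
      using common_orth_bvec_unique[OF y v_snd_le w_snd_le] unfolding yv_def yw_def by blast
    then show False using even_v_snd odd_w_snd by metis
  qed
  ultimately show ?thesis using v_hits w_hits by auto
qed

end

theorem mainTheorem8:
  fixes k :: nat and b bp :: "nat \<Rightarrow> complex^2"
  assumes k: "k \<ge> 1"
    and onb: "\<And>j. j \<le> 2*k+1 \<Longrightarrow>
                cinner2 (b j) (b j) = 1 \<and> cinner2 (bp j) (bp j) = 1 \<and> cinner2 (b j) (bp j) = 0"
    and gen: "\<And>i j. i \<le> 2*k+1 \<Longrightarrow> j \<le> 2*k+1 \<Longrightarrow> i \<noteq> j \<Longrightarrow>
                norm (cinner2 (b i) (b j)) \<notin> {0, 1} \<and> norm (cinner2 (b i) (bp j)) \<notin> {0, 1} \<and>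
                norm (cinner2 (bp i) (b j)) \<notin> {0, 1} \<and> norm (cinner2 (bp i) (bp j)) \<notin> {0, 1}"
  shows "(\<forall>i j. i \<le> 2*k+1 \<longrightarrow> j \<le> 2*k+1 \<longrightarrow>
            (orth4 (vvec k b bp i) (vvec k b bp j) \<longleftrightarrow>
               (int j - int i) mod (2*int k+2) \<in> {1, 2*int k+1}) \<and>
            (orth4 (wvec k b bp i) (wvec k b bp j) \<longleftrightarrow>
               (int j - int i) mod (2*int k+2) \<in> {1, 2*int k+1}) \<and>
            (orth4 (vvec k b bp i) (wvec k b bp j) \<longleftrightarrow> i = j))
       \<and> (\<forall>x y. tensor x y \<noteq> 0 \<longrightarrow>
            card {i. i \<le> 2*k+1 \<and> orth4 (tensor x y) (vvec k b bp i)}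
          + card {i. i \<le> 2*k+1 \<and> orth4 (tensor x y) (wvec k b bp i)} \<le> 3)"
proof -
  interpret generic_bases k b bp
    using k onb gen by unfold_locales
  show ?thesis
    using orth4_vvec_iff orth4_wvec_iff orth4_vvec_wvec_iff card_orth_product_le_3 by blast
qed

end
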